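(* For every integer $d\ge 1$ we have $\tau(d)<4(2d)^d$. In particular, $\tau(d)$ is finite for all $d$.
   Context: For an integer $d\ge1$, call $[-1,1]^d$ the box. A sequence $v_1,\dots,v_t$ ($t\ge 2$) of vectors in $[-1,1]^d$ is called minimal if (i) $v_1+\dots+v_t\in[-1,1]^d$, and (ii) for every index set $S\subset\{1,\dots,t\}$ with $2\le |S|<t$, the sum $\sum_{i\in S}v_i$ lies outside $[-1,1]^d$. Let $\tau(d)$ denote the largest $t$ for which a minimal sequence of length $t$ in $[-1,1]^d$ exists (note $\tau(d)\ge 2$, since condition (ii) is vacuous for $t=2$). Equivalently, $\tau(d)$ is the smallest integer such that whenever $v_1,\dots,v_t\in[-1,1]^d$, $t\ge2$, have sum in $[-1,1]^d$, there is $S\subseteq\{1,\dots,t\}$ with $2\le|S|\le\tau(d)$ and $\sum_{i\in S}v_i\in[-1,1]^d$. *)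

theory Defs
  imports Complex_Main
begin

text \<open>Vectors in R^d are represented as functions nat => real; only coordinates i < d matter.
  A sequence v_1,...,v_t is represented as v :: nat => (nat => real) indexed by 0..<t.\<close>

definition in_box :: "nat \<Rightarrow> (nat \<Rightarrow> real) \<Rightarrow> bool" where
  "in_box d x \<longleftrightarrow> (\<forall>i<d. \<bar>x i\<bar> \<le> 1)"

definition minimal_seq :: "nat \<Rightarrow> nat \<Rightarrow> (nat \<Rightarrow> nat \<Rightarrow> real) \<Rightarrow> bool" where
  "minimal_seq d t v \<longleftrightarrow>
     2 \<le> t \<and>
     (\<forall>j<t. in_box d (v j)) \<and>
     in_box d (\<lambda>i. \<Sum>j<t. v j i) \<and>
     (\<forall>S. S \<subseteq> {..<t} \<and> 2 \<le> card S \<and> card S < t \<longrightarrow>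
        \<not> in_box d (\<lambda>i. \<Sum>j\<in>S. v j i))"

definition tau :: "nat \<Rightarrow> nat" where
  "tau d = Max {t. \<exists>v. minimal_seq d t v}"

end

theory Submission
  imports Defs "HOL-Library.FuncSet"
begin

text \<open>Append \<open>-(v\<^sub>1 + \<dots> + v\<^sub>t)\<close> to a minimal sequence to get \<open>t + 1\<close> box vectors with sum zero.
  By a Steinitz-type argument (Grinberg--Sevastyanov) they can be ordered so that every prefix
  sum lies in \<open>[-d, d]\<^sup>d\<close>: a vertex of the polytope of weights \<open>\<lambda> \<in> [0,1]\<^sup>k\<close> with
  \<open>\<Sum> \<lambda> = k - d\<close> and \<open>\<Sum> \<lambda>\<^sub>i w\<^sub>i = 0\<close> has a zero coordinate, whose vector is put last.
  Cutting \<open>[-d, d]\<^sup>d\<close> into \<open>(2d)\<^sup>d\<close> unit cells, more than \<open>2 (2d)\<^sup>d\<close> prefix sums put three of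
  them into one cell, and two of these three delimit a block of consecutive vectors, of size
  between 2 and \<open>t - 1\<close>, whose sum lies in the box. That block, or its complement, is a
  proper subsequence of \<open>v\<close> with sum in the box. Hence \<open>\<tau>(d) < 2 (2d)\<^sup>d\<close>.\<close>

lemma nonzero_linear_relation:
  fixes x :: "'a \<Rightarrow> nat \<Rightarrow> real"
  assumes "finite F" "n < card F"
  shows "\<exists>\<alpha>. (\<exists>i\<in>F. \<alpha> i \<noteq> 0) \<and> (\<forall>c<n. (\<Sum>i\<in>F. \<alpha> i * x i c) = 0)"
  using assms
proof (induction n arbitrary: F x)
  case 0
  then show ?case by (intro exI[of _ "\<lambda>_. 1"]) (auto simp: card_gt_0_iff)
next
  case (Suc n)
  show ?case
  proof (cases "\<forall>i\<in>F. x i n = 0")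
    case True
    from Suc.IH[of F x] Suc.prems obtain \<alpha> where \<alpha>: "\<exists>i\<in>F. \<alpha> i \<noteq> 0"
      "\<forall>c<n. (\<Sum>i\<in>F. \<alpha> i * x i c) = 0" by auto
    with True show ?thesis by (auto simp: less_Suc_eq)
  next
    case False
    then obtain p where p: "p \<in> F" "x p n \<noteq> 0" by auto
    define F' where "F' = F - {p}"
    \<comment> \<open>Gaussian elimination: clear coordinate \<open>n\<close> using the pivot \<open>p\<close>.\<close>
    define y where "y = (\<lambda>i c. x i c - (x i n / x p n) * x p c)"
    have "finite F'" "n < card F'" using Suc.prems p by (auto simp: F'_def)
    from Suc.IH[OF this, of y] obtain \<beta> where \<beta>: "\<exists>i\<in>F'. \<beta> i \<noteq> 0"
      "\<forall>c<n. (\<Sum>i\<in>F'. \<beta> i * y i c) = 0" by auto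
    define \<alpha> where "\<alpha> = (\<lambda>i. if i = p then - (\<Sum>j\<in>F'. \<beta> j * x j n) / x p n else \<beta> i)"
    have eq: "(\<Sum>i\<in>F. \<alpha> i * x i c) = (\<Sum>i\<in>F'. \<beta> i * y i c)" for c
    proof -
      have "(\<Sum>i\<in>F. \<alpha> i * x i c) = \<alpha> p * x p c + (\<Sum>i\<in>F'. \<beta> i * x i c)"
        using p Suc.prems(1) by (simp add: F'_def sum.remove \<alpha>_def)
      also have "\<dots> = (\<Sum>i\<in>F'. \<beta> i * y i c)"
        by (simp add: \<alpha>_def y_def algebra_simps sum_subtractf sum_distrib_left sum_distrib_right
            sum_divide_distrib)
      finally show ?thesis .
    qed
    have "(\<Sum>i\<in>F'. \<beta> i * y i n) = 0" using p by (simp add: y_def)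
    with eq \<beta>(2) have "\<forall>c<Suc n. (\<Sum>i\<in>F. \<alpha> i * x i c) = 0" by (auto simp: less_Suc_eq)
    moreover have "\<exists>i\<in>F. \<alpha> i \<noteq> 0" using \<beta>(1) by (auto simp: \<alpha>_def F'_def)
    ultimately show ?thesis by blast
  qed
qed

definition balancing_weights ::
    "nat \<Rightarrow> ('a \<Rightarrow> nat \<Rightarrow> real) \<Rightarrow> 'a set \<Rightarrow> real \<Rightarrow> ('a \<Rightarrow> real) \<Rightarrow> bool" where
  "balancing_weights d w A m lam \<longleftrightarrow>
     (\<forall>i\<in>A. 0 \<le> lam i \<and> lam i \<le> 1) \<and> (\<Sum>i\<in>A. lam i) = m \<and>
     (\<forall>c<d. (\<Sum>i\<in>A. lam i * w i c) = 0)"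

definition fractional_indices :: "'a set \<Rightarrow> ('a \<Rightarrow> real) \<Rightarrow> 'a set" where
  "fractional_indices A lam = {i\<in>A. 0 < lam i \<and> lam i < 1}"

lemma move_to_boundary:
  fixes lam \<beta> :: "'a \<Rightarrow> real"
  assumes "finite F" "\<forall>i\<in>F. 0 < lam i \<and> lam i < 1" "\<exists>i\<in>F. \<beta> i \<noteq> 0"
  shows "\<exists>\<epsilon>. (\<forall>i\<in>F. 0 \<le> lam i + \<epsilon> * \<beta> i \<and> lam i + \<epsilon> * \<beta> i \<le> 1) \<and>
           (\<exists>i0\<in>F. lam i0 + \<epsilon> * \<beta> i0 = 0 \<or> lam i0 + \<epsilon> * \<beta> i0 = 1)"
proof -
  define G where "G = {i\<in>F. \<beta> i \<noteq> 0}"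
  \<comment> \<open>the step after which \<open>lam i + \<epsilon> * \<beta> i\<close> hits the boundary of \<open>[0, 1]\<close>\<close>
  define r where "r = (\<lambda>i. if \<beta> i > 0 then (1 - lam i) / \<beta> i else lam i / (- \<beta> i))"
  have G: "finite G" "G \<noteq> {}" using assms(1,3) by (auto simp: G_def)
  define \<epsilon> where "\<epsilon> = Min (r ` G)"
  have "\<epsilon> \<in> r ` G" unfolding \<epsilon>_def using G by (intro Min_in) auto
  then obtain i0 where i0: "i0 \<in> G" "r i0 = \<epsilon>" by auto
  have \<epsilon>_le: "\<epsilon> \<le> r i" if "i \<in> G" for i using G that by (simp add: \<epsilon>_def)
  have "0 < r i0" using i0(1) assms(2) by (auto simp: r_def G_def divide_pos_neg)
  then have \<epsilon>_pos: "0 < \<epsilon>" using i0 by simp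
  have "0 \<le> lam i + \<epsilon> * \<beta> i \<and> lam i + \<epsilon> * \<beta> i \<le> 1" if "i \<in> F" for i
  proof (cases "\<beta> i = 0")
    case False
    then have "\<epsilon> \<le> r i" using that \<epsilon>_le by (simp add: G_def)
    show ?thesis
    proof (cases "\<beta> i > 0")
      case True
      then have "\<epsilon> * \<beta> i \<le> 1 - lam i" using \<open>\<epsilon> \<le> r i\<close> by (simp add: r_def pos_le_divide_eq)
      moreover have "0 < \<epsilon> * \<beta> i" using True \<epsilon>_pos by simp
      ultimately show ?thesis using assms(2) that by auto
    next
      case not_pos: False
      then have neg: "- \<beta> i > 0" using False by simp
      have "\<epsilon> \<le> lam i / (- \<beta> i)" using not_pos \<open>\<epsilon> \<le> r i\<close> by (simp add: r_def)
      then have "\<epsilon> * (- \<beta> i) \<le> lam i" using neg pos_le_divide_eq[of "- \<beta> i"] by simp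
      moreover have "\<epsilon> * \<beta> i < 0" using neg \<epsilon>_pos by (simp add: mult_pos_neg)
      ultimately show ?thesis using assms(2) that by auto
    qed
  qed (use assms(2) that in auto)
  moreover have "lam i0 + \<epsilon> * \<beta> i0 = 0 \<or> lam i0 + \<epsilon> * \<beta> i0 = 1"
    using i0 by (cases "\<beta> i0 > 0") (auto simp: r_def G_def)
  ultimately show ?thesis using i0(1) by (auto simp: G_def)
qed

lemma balancing_weights_shrink_fractional:
  assumes "finite A" "balancing_weights d w A m lam"
    and "d + 1 < card (fractional_indices A lam)"
  shows "\<exists>l. balancing_weights d w A m l \<and> fractional_indices A l \<subset> fractional_indices A lam"
proof -
  define F where "F = fractional_indices A lam"
  have F: "finite F" "F \<subseteq> A" "\<forall>i\<in>F. 0 < lam i \<and> lam i < 1"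
    using assms(1) by (auto simp: F_def fractional_indices_def)
  \<comment> \<open>the extra coordinate \<open>d\<close> makes the relation preserve \<open>\<Sum> lam\<close>\<close>
  define x where "x = (\<lambda>i c. if c < d then w i c else (1::real))"
  obtain \<alpha> where \<alpha>: "\<exists>i\<in>F. \<alpha> i \<noteq> 0" "\<forall>c<d+1. (\<Sum>i\<in>F. \<alpha> i * x i c) = 0"
    using nonzero_linear_relation[OF F(1), of "d + 1" x] assms(3) by (auto simp: F_def)
  define \<beta> where "\<beta> = (\<lambda>i. if i \<in> F then \<alpha> i else 0)"
  have sum_\<beta>: "(\<Sum>i\<in>A. \<beta> i * g i) = (\<Sum>i\<in>F. \<alpha> i * g i)" for g
    using F assms(1) by (intro sum.mono_neutral_cong_right) (auto simp: \<beta>_def)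
  obtain \<epsilon> i0 where \<epsilon>: "\<forall>i\<in>F. 0 \<le> lam i + \<epsilon> * \<beta> i \<and> lam i + \<epsilon> * \<beta> i \<le> 1"
    and i0: "i0 \<in> F" "lam i0 + \<epsilon> * \<beta> i0 = 0 \<or> lam i0 + \<epsilon> * \<beta> i0 = 1"
    using move_to_boundary[OF F(1,3), of \<beta>] \<alpha>(1) by (auto simp: \<beta>_def)
  define l where "l = (\<lambda>i. lam i + \<epsilon> * \<beta> i)"
  have "(\<Sum>i\<in>A. \<beta> i) = 0" using sum_\<beta>[of "\<lambda>_. 1"] \<alpha>(2)[rule_format, of d] by (simp add: x_def)
  moreover have "(\<Sum>i\<in>A. \<beta> i * w i c) = 0" if "c < d" for c
    using sum_\<beta>[of "\<lambda>i. w i c"] \<alpha>(2)[rule_format, of c] that by (simp add: x_def)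
  moreover have "\<forall>i\<in>A. 0 \<le> l i \<and> l i \<le> 1"
    using \<epsilon> assms(2) by (auto simp: l_def \<beta>_def balancing_weights_def)
  ultimately have "balancing_weights d w A m l"
    using assms(2)
    by (simp add: balancing_weights_def l_def sum.distrib distrib_right sum_distrib_left[symmetric]
        mult.assoc)
  moreover have "fractional_indices A l \<subseteq> F - {i0}"
    using i0 by (auto simp: fractional_indices_def F_def l_def \<beta>_def)
  then have "fractional_indices A l \<subset> F" using i0(1) by blast
  ultimately show ?thesis unfolding F_def by blast
qed

lemma sum_gt_if_few_fractional:
  fixes lam :: "'a \<Rightarrow> real"
  assumes "finite A" "\<forall>i\<in>A. 0 < lam i \<and> lam i \<le> 1" "card (fractional_indices A lam) \<le> d + 1"
  shows "real (card A) - real d - 1 < (\<Sum>i\<in>A. lam i)"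
proof -
  define F where "F = fractional_indices A lam"
  have F: "finite F" "F \<subseteq> A" using assms(1) by (auto simp: F_def fractional_indices_def)
  have "(\<Sum>i\<in>A. lam i) = (\<Sum>i\<in>A - F. lam i) + (\<Sum>i\<in>F. lam i)"
    using F assms(1) by (metis sum.subset_diff)
  also have "(\<Sum>i\<in>A - F. lam i) = (\<Sum>i\<in>A - F. 1)"
    using assms(2) by (intro sum.cong) (auto simp: F_def fractional_indices_def)
  also have "\<dots> = real (card A - card F)" using F by (simp add: card_Diff_subset)
  finally have sum_eq: "(\<Sum>i\<in>A. lam i) = real (card A - card F) + (\<Sum>i\<in>F. lam i)" .
  have "card F \<le> card A" using F assms(1) card_mono by blast
  show ?thesis
  proof (cases "F = {}")
    case False
    then have "0 < (\<Sum>i\<in>F. lam i)" using F assms(2) by (intro sum_pos) auto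
    with sum_eq \<open>card F \<le> card A\<close> assms(3) show ?thesis by (simp add: F_def of_nat_diff)
  qed (use sum_eq in simp)
qed

lemma balancing_weights_with_zero:
  assumes "finite A" "balancing_weights d w A m lam" "m \<le> real (card A) - real d - 1"
  shows "\<exists>l. balancing_weights d w A m l \<and> (\<exists>a\<in>A. l a = 0)"
  using assms(2)
proof (induction "card (fractional_indices A lam)" arbitrary: lam rule: less_induct)
  case less
  show ?case
  proof (cases "\<exists>a\<in>A. lam a = 0")
    case False
    show ?thesis
    proof (cases "d + 1 < card (fractional_indices A lam)")
      case True
      then obtain l where "balancing_weights d w A m l"
        "fractional_indices A l \<subset> fractional_indices A lam"
        using balancing_weights_shrink_fractional[OF assms(1) less.prems] by blast
      moreover from this(2) have "card (fractional_indices A l) < card (fractional_indices A lam)"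
        using assms(1) by (intro psubset_card_mono) (auto simp: fractional_indices_def)
      ultimately show ?thesis using less.hyps by blast
    next
      case few: False
      have "\<forall>i\<in>A. 0 < lam i \<and> lam i \<le> 1"
        using False less.prems by (force simp: balancing_weights_def)
      then have "real (card A) - real d - 1 < (\<Sum>i\<in>A. lam i)"
        using few by (intro sum_gt_if_few_fractional[OF assms(1)]) auto
      with less.prems assms(3) show ?thesis by (simp add: balancing_weights_def)
    qed
  qed (use less.prems in blast)
qed

lemma abs_sum_le_card:
  fixes f :: "'a \<Rightarrow> real"
  assumes "\<forall>i\<in>B. \<bar>f i\<bar> \<le> 1"
  shows "\<bar>\<Sum>i\<in>B. f i\<bar> \<le> real (card B)"
proof -
  have "\<bar>\<Sum>i\<in>B. f i\<bar> \<le> (\<Sum>i\<in>B. \<bar>f i\<bar>)" by (rule sum_abs)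
  also have "\<dots> \<le> real (card B)" using sum_bounded_above[of B "\<lambda>i. \<bar>f i\<bar>" 1] assms by simp
  finally show ?thesis .
qed

lemma abs_sum_prefix_le_length:
  fixes f :: "'a \<Rightarrow> real"
  assumes "\<forall>i\<in>set xs. \<bar>f i\<bar> \<le> 1"
  shows "\<bar>\<Sum>i\<in>set (take j xs). f i\<bar> \<le> real (length xs)"
proof -
  have "\<bar>\<Sum>i\<in>set (take j xs). f i\<bar> \<le> real (card (set (take j xs)))"
    using assms by (intro abs_sum_le_card) (auto dest: in_set_takeD)
  also have "card (set (take j xs)) \<le> length xs"
    using card_length[of "take j xs"] by simp
  finally show ?thesis by simp
qed

lemma abs_sum_le_of_balancing_weights:
  assumes "balancing_weights d w A (real (card A) - real d) lam"
    and "finite A" "\<forall>i\<in>A. \<bar>w i c\<bar> \<le> 1" "c < d"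
  shows "\<bar>\<Sum>i\<in>A. w i c\<bar> \<le> real d"
proof -
  have lam: "\<forall>i\<in>A. 0 \<le> lam i \<and> lam i \<le> 1" "(\<Sum>i\<in>A. lam i) = real (card A) - real d"
    "(\<Sum>i\<in>A. lam i * w i c) = 0"
    using assms(1,4) by (auto simp: balancing_weights_def)
  \<comment> \<open>\<open>\<Sum> w\<^sub>i = \<Sum> (1 - lam\<^sub>i) w\<^sub>i\<close>, and the weights \<open>1 - lam\<^sub>i \<in> [0, 1]\<close> add up to \<open>d\<close>\<close>
  have "(\<Sum>i\<in>A. w i c) = (\<Sum>i\<in>A. (1 - lam i) * w i c)"
    using lam(3) by (simp add: algebra_simps sum_subtractf)
  also have "\<bar>\<dots>\<bar> \<le> (\<Sum>i\<in>A. \<bar>(1 - lam i) * w i c\<bar>)" by (rule sum_abs)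
  also have "\<dots> \<le> (\<Sum>i\<in>A. 1 - lam i)"
    using lam(1) assms(3) by (intro sum_mono) (simp add: abs_mult mult_left_le)
  also have "\<dots> = real d" using lam(2) by (simp add: sum_subtractf)
  finally show ?thesis .
qed

lemma balancing_weights_remove_one:
  assumes "finite A" "d < card A" "balancing_weights d w A (real (card A) - real d) lam"
  shows "\<exists>a\<in>A. \<exists>l. balancing_weights d w (A - {a}) (real (card (A - {a})) - real d) l"
proof -
  define k where "k = card A"
  have dk: "d < k" using assms(2) by (simp add: k_def)
  define q where "q = (real k - 1 - real d) / (real k - real d)"
  have q: "0 \<le> q" "q \<le> 1" using dk by (auto simp: q_def)
  have "balancing_weights d w A (q * (real k - real d)) (\<lambda>i. q * lam i)"
    using assms(3) q
    by (auto simp: balancing_weights_def k_def mult_le_one sum_distrib_left[symmetric] mult.assoc)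
  moreover have "q * (real k - real d) = real k - 1 - real d" using dk by (simp add: q_def)
  ultimately obtain l a where l: "balancing_weights d w A (real k - 1 - real d) l"
    and a: "a \<in> A" "l a = 0"
    using balancing_weights_with_zero[OF assms(1)] by (fastforce simp: k_def)
  have "real (card (A - {a})) = real k - 1" using a(1) dk by (simp add: k_def of_nat_diff)
  then have "balancing_weights d w (A - {a}) (real (card (A - {a})) - real d) l"
    using l a assms(1) by (auto simp: balancing_weights_def sum.remove)
  with a(1) show ?thesis by blast
qed

lemma steinitz_ordering:
  assumes "finite A" "d \<le> card A" "\<forall>i\<in>A. \<forall>c<d. \<bar>w i c\<bar> \<le> 1"
    and "balancing_weights d w A (real (card A) - real d) lam"
  shows "\<exists>xs. distinct xs \<and> set xs = A \<and>
           (\<forall>j. \<forall>c<d. \<bar>\<Sum>i\<in>set (take j xs). w i c\<bar> \<le> real d)"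
  using assms
proof (induction "card A" arbitrary: A lam rule: less_induct)
  case less
  show ?case
  proof (cases "card A = d")
    case True
    obtain xs where "distinct xs" "set xs = A" using finite_distinct_list[OF less.prems(1)] by blast
    moreover from this have "length xs = d" using True distinct_card by fastforce
    ultimately show ?thesis using less.prems(3) abs_sum_prefix_le_length by metis
  next
    case False
    then obtain a l where a: "a \<in> A"
      and l: "balancing_weights d w (A - {a}) (real (card (A - {a})) - real d) l"
      using balancing_weights_remove_one[OF less.prems(1) _ less.prems(4)] less.prems(2) by force
    \<comment> \<open>the vector of weight zero is put last\<close>
    have "card (A - {a}) < card A" "d \<le> card (A - {a})"
      using less.prems(1,2) False a by (auto simp: card_Diff1_less)
    moreover have "\<forall>i\<in>A - {a}. \<forall>c<d. \<bar>w i c\<bar> \<le> 1" using less.prems(3) by simp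
    ultimately obtain xs where xs: "distinct xs" "set xs = A - {a}"
      "\<forall>j. \<forall>c<d. \<bar>\<Sum>i\<in>set (take j xs). w i c\<bar> \<le> real d"
      using less.hyps[of "A - {a}"] less.prems(1) l by blast
    have "\<bar>\<Sum>i\<in>set (take j (xs @ [a])). w i c\<bar> \<le> real d" if "c < d" for j c
    proof (cases "j \<le> length xs")
      case True
      then show ?thesis using xs(3) that by simp
    next
      case False
      then have "set (take j (xs @ [a])) = A" using xs(2) a by auto
      then show ?thesis
        using abs_sum_le_of_balancing_weights[OF less.prems(4,1)] less.prems(3) that by simp
    qed
    moreover have "distinct (xs @ [a])" "set (xs @ [a]) = A" using xs a by auto
    ultimately show ?thesis by blast
  qed
qed

lemma steinitz_zero_sum:
  assumes "finite A" "\<forall>i\<in>A. \<forall>c<d. \<bar>w i c\<bar> \<le> 1" "\<forall>c<d. (\<Sum>i\<in>A. w i c) = 0"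
  shows "\<exists>xs. distinct xs \<and> set xs = A \<and>
           (\<forall>j. \<forall>c<d. \<bar>\<Sum>i\<in>set (take j xs). w i c\<bar> \<le> real d)"
proof (cases "card A \<le> d")
  case True
  obtain xs where "distinct xs" "set xs = A" using finite_distinct_list[OF assms(1)] by blast
  moreover from this have "real (length xs) \<le> real d" using True distinct_card by fastforce
  ultimately show ?thesis using assms(2) abs_sum_prefix_le_length order.trans by metis
next
  case False
  define k where "k = card A"
  have "0 < k" using False by (simp add: k_def)
  have "balancing_weights d w A (real k - real d) (\<lambda>_. (real k - real d) / real k)"
    using False \<open>0 < k\<close> assms(3)
    by (auto simp: balancing_weights_def k_def sum_distrib_left[symmetric] sum_divide_distrib[symmetric])
  then show ?thesis
    using steinitz_ordering[OF assms(1) _ assms(2)] False by (simp add: k_def)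
qed

lemma exists_pair_with_gap:
  fixes X :: "nat set"
  assumes "3 \<le> card X" "X \<subseteq> {..<n}" "4 \<le> n"
  shows "\<exists>i\<in>X. \<exists>j\<in>X. i < j \<and> 2 \<le> j - i \<and> j - i \<le> n - 2"
proof -
  have X: "finite X" "X \<noteq> {}" using assms(1) by (auto intro: card_ge_0_finite)
  define a where "a = Min X"
  define c where "c = Max X"
  have "card {a, c} \<le> 2" by (simp add: card_insert_le_m1)
  then have "\<not> X \<subseteq> {a, c}" using assms(1) card_mono[of "{a, c}" X] by auto
  then obtain b where b: "b \<in> X" "b \<noteq> a" "b \<noteq> c" by auto
  have "a \<le> b" "b \<le> c" using X b(1) by (simp_all add: a_def c_def)
  moreover have "a \<in> X" "c \<in> X" using X by (simp_all add: a_def c_def)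
  ultimately have "a \<in> X" "c \<in> X" "a < b" "b < c" "c < n" using b assms(2) by auto
  then show ?thesis
  proof (cases "2 \<le> b - a")
    case False
    show ?thesis
    proof (cases "2 \<le> c - b")
      case True
      then show ?thesis using \<open>a < b\<close> \<open>b < c\<close> \<open>c < n\<close> \<open>c \<in> X\<close> b(1) by (intro bexI[of _ b] bexI[of _ c]) auto
    next
      case False
      then show ?thesis
        using \<open>\<not> 2 \<le> b - a\<close> \<open>a < b\<close> \<open>b < c\<close> \<open>a \<in> X\<close> \<open>c \<in> X\<close> assms(3)
        by (intro bexI[of _ a] bexI[of _ c]) auto
    qed
  qed (use \<open>b < c\<close> \<open>c < n\<close> \<open>a \<in> X\<close> b(1) in \<open>intro bexI[of _ a] bexI[of _ b]; auto\<close>)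
qed

definition unit_cell :: "nat \<Rightarrow> real \<Rightarrow> int" where
  "unit_cell d x = min \<lfloor>x\<rfloor> (int d - 1)"

lemma unit_cell_range:
  assumes "\<bar>x\<bar> \<le> real d" "1 \<le> d"
  shows "unit_cell d x \<in> {- int d..<int d}"
proof -
  have "- int d \<le> \<lfloor>x\<rfloor>" using assms(1) by (simp add: le_floor_iff)
  then show ?thesis using assms(2) by (auto simp: unit_cell_def)
qed

lemma unit_cell_eq_imp_close:
  assumes "x \<le> real d" "y \<le> real d" "unit_cell d x = unit_cell d y"
  shows "\<bar>x - y\<bar> \<le> 1"
proof -
  have upper: "z \<le> of_int (unit_cell d z) + 1" if "z \<le> real d" for z
    using that floor_correct[of z] by (auto simp: unit_cell_def min_def)
  have lower: "of_int (unit_cell d z) \<le> z" for z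
    using floor_correct[of z] by (auto simp: unit_cell_def min_def not_less le_floor_iff)
  show ?thesis
    using upper[OF assms(1)] upper[OF assms(2)] lower[of x] lower[of y] assms(3) by linarith
qed

lemma exists_close_pair:
  fixes Q :: "nat \<Rightarrow> nat \<Rightarrow> real"
  assumes "1 \<le> d" "\<forall>j<n. \<forall>c<d. \<bar>Q j c\<bar> \<le> real d" "2 * (2 * d) ^ d < n"
  shows "\<exists>i j. i < j \<and> j < n \<and> 2 \<le> j - i \<and> j - i \<le> n - 2 \<and> (\<forall>c<d. \<bar>Q j c - Q i c\<bar> \<le> 1)"
proof -
  define cell where "cell = (\<lambda>j. \<lambda>c\<in>{..<d}. unit_cell d (Q j c))"
  define P where "P = (\<Pi>\<^sub>E c\<in>{..<d}. {- int d..<int d})"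
  have "cell \<in> {..<n} \<rightarrow> P" using assms(1,2) unit_cell_range by (auto simp: cell_def P_def)
  moreover have "card P = (2 * d) ^ d"
    using nat_int[of "2 * d"] by (simp add: P_def card_PiE power_mult_distrib)
  moreover have "finite P" by (simp add: P_def finite_PiE)
  moreover from this calculation(2) have "P \<noteq> {}" using assms(1) by auto
  ultimately obtain y where "n \<le> card (cell -` {y} \<inter> {..<n}) * (2 * d) ^ d"
    using pigeonhole_card[of cell "{..<n}" P] by auto
  then have "2 * (2 * d) ^ d < card (cell -` {y} \<inter> {..<n}) * (2 * d) ^ d" using assms(3) by linarith
  then have three: "3 \<le> card (cell -` {y} \<inter> {..<n})"
    by simp
  have "2 * d \<le> (2 * d) ^ d" using assms(1) by (intro self_le_power) auto
  then have "4 \<le> n" using assms(1,3) by linarith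
  then obtain i j where ij: "i < j" "j < n" "2 \<le> j - i" "j - i \<le> n - 2" "cell i = y" "cell j = y"
    using exists_pair_with_gap[OF three] by blast
  have "\<bar>Q j c - Q i c\<bar> \<le> 1" if "c < d" for c
  proof (rule unit_cell_eq_imp_close)
    have "i < n" using ij(1,2) by simp
    then show "Q j c \<le> real d" "Q i c \<le> real d" using assms(2) ij(2) that abs_le_D1 by blast+
    show "unit_cell d (Q j c) = unit_cell d (Q i c)"
      using fun_cong[OF ij(5), of c] fun_cong[OF ij(6), of c] that by (simp add: cell_def)
  qed
  with ij show ?thesis by blast
qed

definition zero_sum_completion :: "nat \<Rightarrow> (nat \<Rightarrow> nat \<Rightarrow> real) \<Rightarrow> nat \<Rightarrow> nat \<Rightarrow> real" where
  "zero_sum_completion t v = (\<lambda>j. if j < t then v j else (\<lambda>c. - (\<Sum>k<t. v k c)))"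

lemma sum_zero_sum_completion: "(\<Sum>j<Suc t. zero_sum_completion t v j c) = 0"
  by (simp add: zero_sum_completion_def)

lemma sum_zero_sum_completion_eq:
  "B \<subseteq> {..<t} \<Longrightarrow> (\<Sum>j\<in>B. zero_sum_completion t v j c) = (\<Sum>j\<in>B. v j c)"
  by (intro sum.cong) (auto simp: zero_sum_completion_def)

lemma minimal_seq_completion_bounded:
  assumes "minimal_seq d t v"
  shows "\<forall>j\<in>{..<Suc t}. \<forall>c<d. \<bar>zero_sum_completion t v j c\<bar> \<le> 1"
  using assms by (auto simp: minimal_seq_def in_box_def zero_sum_completion_def less_Suc_eq)

lemma minimal_seq_block_not_in_box:
  assumes "minimal_seq d t v" "B \<subseteq> {..<Suc t}" "2 \<le> card B" "card B < t"
  shows "\<not> in_box d (\<lambda>c. \<Sum>j\<in>B. zero_sum_completion t v j c)"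
proof
  assume box: "in_box d (\<lambda>c. \<Sum>j\<in>B. zero_sum_completion t v j c)"
  have proper: "\<not> in_box d (\<lambda>c. \<Sum>j\<in>S. v j c)" if "S \<subseteq> {..<t}" "2 \<le> card S" "card S < t" for S
    using assms(1) that by (auto simp: minimal_seq_def)
  show False
  proof (cases "t \<in> B")
    case False
    then have "B \<subseteq> {..<t}" using assms(2) by (auto simp: less_Suc_eq)
    with box proper assms(3,4) show False by (simp add: sum_zero_sum_completion_eq)
  next
    case True
    \<comment> \<open>the complement of \<open>B\<close> avoids the added vector and has the opposite sum\<close>
    define C where "C = {..<Suc t} - B"
    have C: "C \<subseteq> {..<t}" using True by (auto simp: C_def less_Suc_eq)
    have "card C = Suc t - card B" using assms(2) by (simp add: C_def card_Diff_subset finite_subset)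
    then have "2 \<le> card C" "card C < t" using assms(3,4) by auto
    moreover have "(\<Sum>j\<in>C. zero_sum_completion t v j c) = - (\<Sum>j\<in>B. zero_sum_completion t v j c)" for c
      using sum_zero_sum_completion[of t v c] sum.subset_diff[OF assms(2), of "\<lambda>j. zero_sum_completion t v j c"]
      by (simp add: C_def)
    ultimately show False
      using box proper[OF C] by (simp add: in_box_def sum_zero_sum_completion_eq[OF C])
  qed
qed

lemma minimal_seq_length_bound:
  assumes "minimal_seq d t v" "1 \<le> d"
  shows "t < 2 * (2 * d) ^ d"
proof (rule ccontr)
  assume "\<not> t < 2 * (2 * d) ^ d"
  then have long: "2 * (2 * d) ^ d < Suc t" by simp
  define w where "w = zero_sum_completion t v"
  obtain xs where xs: "distinct xs" "set xs = {..<Suc t}"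
    "\<forall>j. \<forall>c<d. \<bar>\<Sum>i\<in>set (take j xs). w i c\<bar> \<le> real d"
    using steinitz_zero_sum[of "{..<Suc t}" d w] minimal_seq_completion_bounded[OF assms(1)]
      sum_zero_sum_completion[of t v] by (auto simp: w_def)
  then obtain i j where ij: "i < j" "j < Suc t" "2 \<le> j - i" "j - i \<le> Suc t - 2"
    and close: "\<forall>c<d. \<bar>(\<Sum>k\<in>set (take j xs). w k c) - (\<Sum>k\<in>set (take i xs). w k c)\<bar> \<le> 1"
    using exists_close_pair[OF assms(2) _ long, of "\<lambda>j c. \<Sum>k\<in>set (take j xs). w k c"] by blast
  define B where "B = set (take j xs) - set (take i xs)"
  have prefix: "set (take i xs) \<subseteq> set (take j xs)" using ij(1) by (simp add: set_take_subset_set_take)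
  have "length xs = Suc t" using xs(1,2) distinct_card by fastforce
  then have "card B = j - i"
    using prefix ij(1,2) xs(1) by (simp add: B_def card_Diff_subset distinct_card)
  moreover have "B \<subseteq> {..<Suc t}" using xs(2) by (auto simp: B_def dest: in_set_takeD)
  moreover have "in_box d (\<lambda>c. \<Sum>k\<in>B. w k c)"
    using close prefix by (simp add: in_box_def B_def sum_diff)
  ultimately show False
    using minimal_seq_block_not_in_box[OF assms(1)] ij(3,4) by (auto simp: w_def)
qed

theorem theorem1:
  fixes d :: nat
  assumes "1 \<le> d"
  shows "finite {t. \<exists>v. minimal_seq d t v} \<and> tau d < 4 * (2 * d) ^ d"
proof -
  have bounded: "{t. \<exists>v. minimal_seq d t v} \<subseteq> {..< 2 * (2 * d) ^ d}"
    using minimal_seq_length_bound[OF _ assms] by blast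
  then have finite: "finite {t. \<exists>v. minimal_seq d t v}" by (rule finite_subset) simp
  have "minimal_seq d 2 (\<lambda>_ _. 0)" by (simp add: minimal_seq_def in_box_def)
  then have "tau d \<in> {t. \<exists>v. minimal_seq d t v}"
    unfolding tau_def using finite by (intro Max_in) auto
  with bounded finite show ?thesis by auto
qed

end
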